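(* Let $\mathfrak a$ and $A$ be as in the context. Let $R$ be an $A$-module with a decreasing filtration by $A$-submodules $({}^iR)_{i\in\mathbb Z}$ such that ${}^iR=R$ for $i\ll0$, ${}^iR=0$ for $i\gg0$, and each ${}^iR/{}^{i+1}R$ is projective as an $\mathfrak a$-module. Let $N$ be an admissible hybrid $A$-module and $m$ an integer with $\mathfrak aN_m=N_{\ge m}$. Suppose $\phi:R\twoheadrightarrow N$ is a surjection of $A$-modules such that $\phi({}^iR)=N_{\ge i}$ for all $i\le m$, and ${}^iR=0$ for $i>m$. Then there is a choice of $\mathfrak a_0$-submodules $h_i\subseteq{}^iR$, each an $\mathfrak a_0$-stable complement to ${}^{i+1}R+\mathrm{rad}^\flat({}^iR)$ in ${}^iR$, with $\phi(h_i)\subseteq N_i$ for all $i$. The induced $\mathfrak a$-grading on $R$ (placing $h_i$ in grade $i$) makes $R$ an admissible hybrid $A$-module and $\phi$ a surjective morphism of admissible hybrid $A$-modules.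
   Context: All algebras/modules finite dimensional over a field. $\mathfrak a=\bigoplus_{n\ge0}\mathfrak a_n$ is positively graded and $\mathfrak a\to A$ is an algebra homomorphism such that $\mathfrak a_{\ge j}A$ is a two-sided ideal of $A$ for every $j\ge0$, where $\mathfrak a_{\ge j}=\bigoplus_{i\ge j}\mathfrak a_i$. For an $\mathfrak a$-module $X$, $\mathrm{rad}^\flat X=\mathfrak a_{\ge1}X$. A hybrid $A$-module is an $A$-module with a fixed grading making it a graded $\mathfrak a$-module; it is admissible if each $N_{\ge j}=\bigoplus_{i\ge j}N_i$ is an $A$-submodule; morphisms are grading-preserving $A$-maps. *)

theory Defs
  imports Main "HOL.Vector_Spaces"
begin

text \<open>A finite-dimensional
k-algebra is a type of class ring_1 together with a k-scalar multiplication;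
modules are types of class ab_group_add with a k-scalar multiplication and an
action of the algebra.\<close>

definition fin_dim :: "('k::field \<Rightarrow> 'v::ab_group_add \<Rightarrow> 'v) \<Rightarrow> bool" where
  "fin_dim s \<longleftrightarrow> (\<exists>B. finite B \<and> module.span s B = UNIV)"

definition k_algebra :: "('k::field \<Rightarrow> 'a::ring_1 \<Rightarrow> 'a) \<Rightarrow> bool" where
  "k_algebra s \<longleftrightarrow> vector_space s \<and> fin_dim s \<and>
     (\<forall>c x y. s c (x * y) = s c x * y \<and> s c (x * y) = x * s c y)"

definition alg_hom :: "('k::field \<Rightarrow> 'a::ring_1 \<Rightarrow> 'a) \<Rightarrow> ('k \<Rightarrow> 'b::ring_1 \<Rightarrow> 'b)
    \<Rightarrow> ('a \<Rightarrow> 'b) \<Rightarrow> bool" where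
  "alg_hom sa sb f \<longleftrightarrow> f 1 = 1 \<and> (\<forall>x y. f (x * y) = f x * f y \<and> f (x + y) = f x + f y)
     \<and> (\<forall>c x. f (sa c x) = sb c (f x))"

definition alg_module :: "('k::field \<Rightarrow> 'A::ring_1 \<Rightarrow> 'A) \<Rightarrow> ('k \<Rightarrow> 'm::ab_group_add \<Rightarrow> 'm)
    \<Rightarrow> ('A \<Rightarrow> 'm \<Rightarrow> 'm) \<Rightarrow> bool" where
  "alg_module sA sM act \<longleftrightarrow> vector_space sM \<and> fin_dim sM \<and>
     (\<forall>v. act 1 v = v) \<and>
     (\<forall>x y v. act (x * y) v = act x (act y v)) \<and>
     (\<forall>x y v. act (x + y) v = act x v + act y v) \<and>
     (\<forall>x v w. act x (v + w) = act x v + act x w) \<and>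
     (\<forall>c x v. act (sA c x) v = sM c (act x v)) \<and>
     (\<forall>c x v. act x (sM c v) = sM c (act x v))"

definition is_dsum :: "('k::field \<Rightarrow> 'v::ab_group_add \<Rightarrow> 'v) \<Rightarrow> ('i \<Rightarrow> 'v set) \<Rightarrow> bool" where
  "is_dsum s G \<longleftrightarrow> (\<forall>i. module.subspace s (G i)) \<and>
     (\<forall>x. \<exists>!g. finite {i. g i \<noteq> 0} \<and> (\<forall>i. g i \<in> G i) \<and> x = sum g {i. g i \<noteq> 0})"

definition pos_graded :: "('k::field \<Rightarrow> 'a::ring_1 \<Rightarrow> 'a) \<Rightarrow> (nat \<Rightarrow> 'a set) \<Rightarrow> bool" where
  "pos_graded s ag \<longleftrightarrow> is_dsum s ag \<and>
     (\<forall>i j x y. x \<in> ag i \<longrightarrow> y \<in> ag j \<longrightarrow> x * y \<in> ag (i + j))"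

definition alg_ge :: "('k::field \<Rightarrow> 'a::ring_1 \<Rightarrow> 'a) \<Rightarrow> (nat \<Rightarrow> 'a set) \<Rightarrow> nat \<Rightarrow> 'a set" where
  "alg_ge s ag j = module.span s (\<Union>i\<in>{j..}. ag i)"

definition mod_ge :: "('k::field \<Rightarrow> 'v::ab_group_add \<Rightarrow> 'v) \<Rightarrow> (int \<Rightarrow> 'v set) \<Rightarrow> int \<Rightarrow> 'v set" where
  "mod_ge s G j = module.span s (\<Union>i\<in>{j..}. G i)"

definition act_span :: "('k::field \<Rightarrow> 'm::ab_group_add \<Rightarrow> 'm) \<Rightarrow> ('A \<Rightarrow> 'm \<Rightarrow> 'm)
    \<Rightarrow> ('a \<Rightarrow> 'A) \<Rightarrow> 'a set \<Rightarrow> 'm set \<Rightarrow> 'm set" where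
  "act_span sM act f S X = module.span sM {act (f x) v | x v. x \<in> S \<and> v \<in> X}"

definition rad_flat :: "('k::field \<Rightarrow> 'a::ring_1 \<Rightarrow> 'a) \<Rightarrow> (nat \<Rightarrow> 'a set)
    \<Rightarrow> ('k \<Rightarrow> 'm::ab_group_add \<Rightarrow> 'm) \<Rightarrow> ('A \<Rightarrow> 'm \<Rightarrow> 'm) \<Rightarrow> ('a \<Rightarrow> 'A) \<Rightarrow> 'm set \<Rightarrow> 'm set" where
  "rad_flat sa ag sM act f X = act_span sM act f (alg_ge sa ag 1) X"

text \<open>Standing assumption: a_{>=j} A is a two-sided ideal of A for every j.\<close>
definition ideal_condition :: "('k::field \<Rightarrow> 'a::ring_1 \<Rightarrow> 'a) \<Rightarrow> (nat \<Rightarrow> 'a set)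
    \<Rightarrow> ('k \<Rightarrow> 'A::ring_1 \<Rightarrow> 'A) \<Rightarrow> ('a \<Rightarrow> 'A) \<Rightarrow> bool" where
  "ideal_condition sa ag sA f \<longleftrightarrow>
     (\<forall>j. \<forall>w \<in> module.span sA {f x * y | x y. x \<in> alg_ge sa ag j}.
          \<forall>z. z * w \<in> module.span sA {f x * y | x y. x \<in> alg_ge sa ag j}
            \<and> w * z \<in> module.span sA {f x * y | x y. x \<in> alg_ge sa ag j})"

definition A_submodule :: "('k::field \<Rightarrow> 'm::ab_group_add \<Rightarrow> 'm) \<Rightarrow> ('A \<Rightarrow> 'm \<Rightarrow> 'm) \<Rightarrow> 'm set \<Rightarrow> bool" where
  "A_submodule sM act X \<longleftrightarrow> module.subspace sM X \<and> (\<forall>z. \<forall>v\<in>X. act z v \<in> X)"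

definition graded_amod :: "('k::field \<Rightarrow> 'm::ab_group_add \<Rightarrow> 'm) \<Rightarrow> ('A \<Rightarrow> 'm \<Rightarrow> 'm)
    \<Rightarrow> ('a \<Rightarrow> 'A) \<Rightarrow> (nat \<Rightarrow> 'a set) \<Rightarrow> (int \<Rightarrow> 'm set) \<Rightarrow> bool" where
  "graded_amod sM act f ag G \<longleftrightarrow> is_dsum sM G \<and>
     (\<forall>i j x v. x \<in> ag i \<longrightarrow> v \<in> G j \<longrightarrow> act (f x) v \<in> G (j + int i))"

definition admissible_hybrid :: "('k::field \<Rightarrow> 'A::ring_1 \<Rightarrow> 'A) \<Rightarrow> ('k \<Rightarrow> 'm::ab_group_add \<Rightarrow> 'm)
    \<Rightarrow> ('A \<Rightarrow> 'm \<Rightarrow> 'm) \<Rightarrow> ('a \<Rightarrow> 'A) \<Rightarrow> (nat \<Rightarrow> 'a set) \<Rightarrow> (int \<Rightarrow> 'm set) \<Rightarrow> bool" where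
  "admissible_hybrid sA sM act f ag G \<longleftrightarrow> alg_module sA sM act \<and> graded_amod sM act f ag G \<and>
     (\<forall>j. A_submodule sM act (mod_ge sM G j))"

definition A_hom :: "('k::field \<Rightarrow> 'm::ab_group_add \<Rightarrow> 'm) \<Rightarrow> ('A \<Rightarrow> 'm \<Rightarrow> 'm)
    \<Rightarrow> ('k \<Rightarrow> 'n::ab_group_add \<Rightarrow> 'n) \<Rightarrow> ('A \<Rightarrow> 'n \<Rightarrow> 'n) \<Rightarrow> ('m \<Rightarrow> 'n) \<Rightarrow> bool" where
  "A_hom sM actM sN actN \<phi> \<longleftrightarrow> (\<forall>v w. \<phi> (v + w) = \<phi> v + \<phi> w) \<and>
     (\<forall>c v. \<phi> (sM c v) = sN c (\<phi> v)) \<and> (\<forall>z v. \<phi> (actM z v) = actN z (\<phi> v))"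

text \<open>Free a-module of rank n: functions nat => 'a vanishing from n on, with
componentwise left action.\<close>
definition free_amod :: "nat \<Rightarrow> (nat \<Rightarrow> 'a::ring_1) set" where
  "free_amod n = {g. \<forall>i\<ge>n. g i = 0}"

text \<open>The quotient a-module U/V (V \<subseteq> U submodules of an A-module, a acting through f)
is projective, i.e. a direct summand of a free a-module of finite rank:
there are a-linear maps p from the free module to U and s from U to the free module,
s vanishing on V, such that p o s induces the identity of U/V.\<close>
definition proj_quot :: "('A \<Rightarrow> 'm::ab_group_add \<Rightarrow> 'm) \<Rightarrow> ('a::ring_1 \<Rightarrow> 'A)
    \<Rightarrow> 'm set \<Rightarrow> 'm set \<Rightarrow> bool" where
  "proj_quot act f U V \<longleftrightarrow> (\<exists>n p s.
     (\<forall>g\<in>free_amod n. p g \<in> U) \<and>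
     (\<forall>g\<in>free_amod n. \<forall>h\<in>free_amod n. p (\<lambda>i. g i + h i) = p g + p h) \<and>
     (\<forall>g\<in>free_amod n. \<forall>x. p (\<lambda>i. x * g i) = act (f x) (p g)) \<and>
     (\<forall>u\<in>U. s u \<in> free_amod n) \<and>
     (\<forall>u\<in>U. \<forall>w\<in>U. s (u + w) = (\<lambda>i. s u i + s w i)) \<and>
     (\<forall>u\<in>U. \<forall>x. s (act (f x) u) = (\<lambda>i. x * s u i)) \<and>
     (\<forall>v\<in>V. s v = (\<lambda>i. 0)) \<and>
     (\<forall>u\<in>U. p (s u) - u \<in> V))"

end

theory Submission
  imports Defs
begin

text \<open>For each \<open>i\<close>, split \<open>F i \<rightarrow> F i / F (i + 1)\<close> through a free \<open>\<aa>\<close>-module, keep only the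
  degree-0 parts of the coordinates, and recombine them with lifts of the free generators that
  \<open>\<phi>\<close> maps into \<open>N\<^sub>i\<close>. This is an \<open>\<aa>\<^sub>0\<close>-linear projection of \<open>F i\<close> whose kernel contains
  \<open>F (i + 1) + rad\<^sup>\<flat> (F i)\<close>; its image \<open>h\<^sub>i\<close> is the required complement. Finite dimension makes
  \<open>\<aa>\<^sub>\<ge>\<^sub>1\<close> nilpotent, so a Nakayama argument shows that the \<open>\<aa>\<^sub>d h\<^sub>i'\<close> with \<open>i' \<ge> i\<close> span \<open>F i\<close>,
  while a relation among them has coordinates fixed by a matrix with entries in \<open>\<aa>\<^sub>\<ge>\<^sub>1\<close>, hence
  trivial. Thus placing \<open>\<aa>\<^sub>d h\<^sub>i\<close> in degree \<open>i + d\<close> is a grading, and the ideal condition on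
  \<open>\<aa>\<^sub>\<ge>\<^sub>j A\<close> makes every \<open>R\<^sub>\<ge>\<^sub>j\<close> an \<open>A\<close>-submodule.\<close>

context vector_space
begin

definition independent_subspaces :: "('i \<Rightarrow> 'b set) \<Rightarrow> bool" where
  "independent_subspaces V \<longleftrightarrow>
     (\<forall>I w. finite I \<longrightarrow> (\<forall>i\<in>I. w i \<in> V i) \<longrightarrow> sum w I = 0 \<longrightarrow> (\<forall>i\<in>I. w i = 0))"

lemma independent_subspacesD:
  "independent_subspaces V \<Longrightarrow> finite I \<Longrightarrow> (\<And>i. i \<in> I \<Longrightarrow> w i \<in> V i) \<Longrightarrow> sum w I = 0
    \<Longrightarrow> i \<in> I \<Longrightarrow> w i = 0"
  unfolding independent_subspaces_def by blast

lemma span_UN_subspaces: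
  assumes V: "\<And>i. subspace (V i)" and x: "x \<in> span (\<Union>i\<in>K. V i)"
  shows "\<exists>I w. finite I \<and> I \<subseteq> K \<and> (\<forall>i\<in>I. w i \<in> V i) \<and> x = sum w I"
proof -
  let ?P = "{x. \<exists>I w. finite I \<and> I \<subseteq> K \<and> (\<forall>i\<in>I. w i \<in> V i) \<and> x = sum w I}"
  have sub: "subspace ?P" unfolding subspace_def
  proof (intro conjI ballI allI)
    show "0 \<in> ?P" by (intro CollectI exI[of _ "{}"]) simp
  next
    fix y z assume "y \<in> ?P" "z \<in> ?P"
    then obtain I w J u where I: "finite I" "I \<subseteq> K" "\<forall>i\<in>I. w i \<in> V i" "y = sum w I"
      and J: "finite J" "J \<subseteq> K" "\<forall>i\<in>J. u i \<in> V i" "z = sum u J"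
      by blast
    let ?v = "\<lambda>i. (if i \<in> I then w i else 0) + (if i \<in> J then u i else 0)"
    have "(\<Sum>i\<in>I \<union> J. if i \<in> I then w i else 0) = sum w I"
      "(\<Sum>i\<in>I \<union> J. if i \<in> J then u i else 0) = sum u J"
      using I(1) J(1) by (simp_all add: sum.inter_restrict[symmetric] Int_absorb1 Int_absorb2)
    then have "y + z = sum ?v (I \<union> J)"
      using I(4) J(4) by (simp add: sum.distrib)
    moreover have "\<forall>i\<in>I \<union> J. ?v i \<in> V i"
      using I J V subspace_add subspace_0 by simp
    ultimately show "y + z \<in> ?P"
      using I J by (intro CollectI exI[of _ "I \<union> J"] exI[of _ ?v]) blast
  next
    fix c y assume "y \<in> ?P"
    then obtain I w where I: "finite I" "I \<subseteq> K" "\<forall>i\<in>I. w i \<in> V i" "y = sum w I"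
      by blast
    then show "c *s y \<in> ?P"
      using V subspace_scale
      by (intro CollectI exI[of _ I] exI[of _ "\<lambda>i. c *s w i"]) (simp add: scale_sum_right)
  qed
  have gen: "(\<Union>i\<in>K. V i) \<subseteq> ?P"
  proof
    fix y assume "y \<in> (\<Union>i\<in>K. V i)"
    then obtain i where "i \<in> K" "y \<in> V i" by blast
    then show "y \<in> ?P" by (intro CollectI exI[of _ "{i}"] exI[of _ "\<lambda>_. y"]) simp
  qed
  from span_minimal[OF gen sub] x show ?thesis by blast
qed

lemma independent_subspaces_blocks:
  assumes V: "\<And>p. subspace (V p)" and indep: "independent_subspaces V"
    and disj: "\<And>j j'. j \<noteq> j' \<Longrightarrow> B j \<inter> B j' = {}"
  shows "independent_subspaces (\<lambda>j. span (\<Union>p\<in>B j. V p))"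
  unfolding independent_subspaces_def
proof (intro allI impI ballI)
  fix J u j
  assume J: "finite J" and u: "\<forall>j\<in>J. u j \<in> span (\<Union>p\<in>B j. V p)" and sum0: "sum u J = 0"
    and j: "j \<in> J"
  have "\<exists>I w. finite I \<and> I \<subseteq> B j \<and> (\<forall>p\<in>I. w p \<in> V p) \<and> u j = sum w I"
    if "j \<in> J" for j
    using span_UN_subspaces[OF V u[rule_format, OF that]] .
  then obtain I w where Iw: "\<And>j. j \<in> J \<Longrightarrow> finite (I j) \<and> I j \<subseteq> B j \<and> (\<forall>p\<in>I j. w j p \<in> V p)
      \<and> u j = sum (w j) (I j)"
    by metis
  define w' where "w' p = (\<Sum>j\<in>J. if p \<in> I j then w j p else 0)" for p
  have w': "w' p = w j p" if "j \<in> J" "p \<in> I j" for j p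
  proof -
    have "w' p = (\<Sum>j'\<in>J. if j' = j then w j p else 0)"
      unfolding w'_def
    proof (intro sum.cong refl)
      fix j' assume "j' \<in> J"
      then show "(if p \<in> I j' then w j' p else 0) = (if j' = j then w j p else 0)"
        using that Iw disj[of j' j] by auto
    qed
    then show ?thesis using that J by simp
  qed
  have "sum w' (\<Union>j\<in>J. I j) = (\<Sum>j\<in>J. sum w' (I j))"
    using J Iw disj by (intro sum.UNION_disjoint) blast+
  also have "\<dots> = sum u J" using Iw w' by (intro sum.cong) auto
  finally have "sum w' (\<Union>j\<in>J. I j) = 0" using sum0 by simp
  moreover have "finite (\<Union>j\<in>J. I j)" using J Iw by blast
  moreover have "w' p \<in> V p" if "p \<in> (\<Union>j\<in>J. I j)" for p using that Iw w' by fastforce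
  ultimately have "w' p = 0" if "p \<in> I j" for p
    using independent_subspacesD[OF indep] j that by blast
  then show "u j = 0" using Iw[OF j] w'[OF j] by simp
qed

lemma is_dsumI:
  assumes V: "\<And>i. subspace (V i)" and indep: "independent_subspaces V"
    and spanning: "span (\<Union>i. V i) = UNIV"
  shows "is_dsum scale V"
  unfolding is_dsum_def
proof (intro conjI allI V)
  fix x
  obtain I w where Iw: "finite I" "\<forall>i\<in>I. w i \<in> V i" "x = sum w I"
    using span_UN_subspaces[of V x UNIV] V spanning by auto
  define g where "g i = (if i \<in> I then w i else 0)" for i
  have supp: "{i. g i \<noteq> 0} \<subseteq> I" unfolding g_def by auto
  have g: "finite {i. g i \<noteq> 0} \<and> (\<forall>i. g i \<in> V i) \<and> x = sum g {i. g i \<noteq> 0}"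
  proof (intro conjI allI)
    show "finite {i. g i \<noteq> 0}" using Iw(1) supp finite_subset by blast
    show "g i \<in> V i" for i using Iw(2) V subspace_0 unfolding g_def by auto
    have "sum g {i. g i \<noteq> 0} = sum g I" using Iw(1) supp by (intro sum.mono_neutral_left) auto
    then show "x = sum g {i. g i \<noteq> 0}" using Iw(3) unfolding g_def by simp
  qed
  show "\<exists>!g. finite {i. g i \<noteq> 0} \<and> (\<forall>i. g i \<in> V i) \<and> x = sum g {i. g i \<noteq> 0}"
  proof (rule ex1I[of _ g])
    show "finite {i. g i \<noteq> 0} \<and> (\<forall>i. g i \<in> V i) \<and> x = sum g {i. g i \<noteq> 0}" by (rule g)
    fix g' assume g': "finite {i. g' i \<noteq> 0} \<and> (\<forall>i. g' i \<in> V i) \<and> x = sum g' {i. g' i \<noteq> 0}"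
    let ?U = "{i. g i \<noteq> 0} \<union> {i. g' i \<noteq> 0}"
    have finU: "finite ?U" using g g' by simp
    have "sum g ?U = sum g {i. g i \<noteq> 0}" "sum g' ?U = sum g' {i. g' i \<noteq> 0}"
      by (rule sum.mono_neutral_right[OF finU]; auto)+
    then have "sum g ?U = x" "sum g' ?U = x" using g g' by simp_all
    then have "sum (\<lambda>i. g' i - g i) ?U = 0" by (simp add: sum_subtractf)
    moreover have "g' i - g i \<in> V i" for i using g g' V subspace_diff by blast
    ultimately have "g' i - g i = 0" if "i \<in> ?U" for i
      using independent_subspacesD[OF indep finU, of "\<lambda>i. g' i - g i"] that by blast
    then show "g' = g"
      by (intro ext) (metis (mono_tags) UnCI mem_Collect_eq right_minus_eq)
  qed
qed

end

locale fin_graded_algebra =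
  fixes sa :: "'k::field \<Rightarrow> 'a::ring_1 \<Rightarrow> 'a" and ag :: "nat \<Rightarrow> 'a set"
  assumes k_algebra: "k_algebra sa" and pos_graded: "pos_graded sa ag"
begin

sublocale alg: vector_space sa using k_algebra unfolding k_algebra_def by blast

lemma scale_mult_left: "sa c (x * y) = sa c x * y"
  using k_algebra unfolding k_algebra_def by blast

lemma scale_eq_mult: "sa c x = sa c 1 * x"
  using scale_mult_left[of c 1 x] by simp

lemma homogeneous_subspace: "alg.subspace (ag d)"
  using pos_graded unfolding pos_graded_def is_dsum_def by auto

lemma homogeneous_mult: "x \<in> ag i \<Longrightarrow> y \<in> ag j \<Longrightarrow> x * y \<in> ag (i + j)"
  using pos_graded unfolding pos_graded_def by auto

lemma zero_homogeneous: "0 \<in> ag d"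
  using homogeneous_subspace alg.subspace_0 by blast

definition hcomp :: "'a \<Rightarrow> nat \<Rightarrow> 'a" where
  "hcomp x = (THE g. finite {i. g i \<noteq> 0} \<and> (\<forall>i. g i \<in> ag i) \<and> x = sum g {i. g i \<noteq> 0})"

lemma hcomp_ex1: "\<exists>!g. finite {i. g i \<noteq> 0} \<and> (\<forall>i. g i \<in> ag i) \<and> x = sum g {i. g i \<noteq> 0}"
  using pos_graded unfolding pos_graded_def is_dsum_def by auto

lemma hcomp: "finite {i. hcomp x i \<noteq> 0} \<and> (\<forall>i. hcomp x i \<in> ag i) \<and> x = sum (hcomp x) {i. hcomp x i \<noteq> 0}"
  unfolding hcomp_def by (rule theI'[OF hcomp_ex1])

lemma hcomp_in: "hcomp x i \<in> ag i"
  using hcomp by blast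

lemma hcomp_finite: "finite {i. hcomp x i \<noteq> 0}"
  using hcomp by blast

lemma sum_hcomp:
  assumes "finite S" "{i. hcomp x i \<noteq> 0} \<subseteq> S" shows "sum (hcomp x) S = x"
proof -
  have "sum (hcomp x) S = sum (hcomp x) {i. hcomp x i \<noteq> 0}"
    by (rule sum.mono_neutral_right[OF assms]) auto
  then show ?thesis using hcomp[of x] by simp
qed

lemma hcomp_unique:
  assumes "finite S" "\<And>i. g i \<in> ag i" "\<And>i. i \<notin> S \<Longrightarrow> g i = 0" "x = sum g S"
  shows "hcomp x = g"
  unfolding hcomp_def
proof (rule the1_equality[OF hcomp_ex1])
  have sub: "{i. g i \<noteq> 0} \<subseteq> S" using assms(3) by auto
  have "sum g S = sum g {i. g i \<noteq> 0}"
    by (rule sum.mono_neutral_right[OF assms(1) sub]) auto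
  then show "finite {i. g i \<noteq> 0} \<and> (\<forall>i. g i \<in> ag i) \<and> x = sum g {i. g i \<noteq> 0}"
    using assms sub finite_subset by auto
qed

lemma hcomp_add: "hcomp (x + y) = (\<lambda>i. hcomp x i + hcomp y i)"
proof (rule hcomp_unique)
  let ?S = "{i. hcomp x i \<noteq> 0} \<union> {i. hcomp y i \<noteq> 0}"
  show "finite ?S" using hcomp_finite by blast
  show "hcomp x i + hcomp y i \<in> ag i" for i
    using homogeneous_subspace hcomp_in alg.subspace_add by blast
  show "i \<notin> ?S \<Longrightarrow> hcomp x i + hcomp y i = 0" for i by simp
  show "x + y = (\<Sum>i\<in>?S. hcomp x i + hcomp y i)"
    using sum_hcomp[of ?S x] sum_hcomp[of ?S y] hcomp_finite by (simp add: sum.distrib)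
qed

lemma hcomp_scale: "hcomp (sa c x) = (\<lambda>i. sa c (hcomp x i))"
proof (rule hcomp_unique)
  show "finite {i. hcomp x i \<noteq> 0}" by (rule hcomp_finite)
  show "sa c (hcomp x i) \<in> ag i" for i
    using homogeneous_subspace hcomp_in alg.subspace_scale by blast
  show "sa c x = (\<Sum>i\<in>{i. hcomp x i \<noteq> 0}. sa c (hcomp x i))"
    using hcomp[of x] by (metis alg.scale_sum_right)
qed simp

lemma hcomp_homogeneous: "x \<in> ag e \<Longrightarrow> hcomp x = (\<lambda>i. if i = e then x else 0)"
  by (rule hcomp_unique[where S="{e}"]) (auto simp: zero_homogeneous)

lemma hcomp_zero: "hcomp 0 = (\<lambda>i. 0)"
  using hcomp_homogeneous[OF zero_homogeneous[of 0]] by auto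

lemma hcomp_additive: "additive (\<lambda>x. hcomp x i)"
  by standard (simp add: hcomp_add)

lemmas hcomp_diff = additive.diff[OF hcomp_additive]
  and hcomp_sum = additive.sum[OF hcomp_additive]

lemma hcomp_mult_degree_0: "x \<in> ag 0 \<Longrightarrow> hcomp (x * y) i = x * hcomp y i"
proof -
  assume x: "x \<in> ag 0"
  have "hcomp (x * y) = (\<lambda>i. x * hcomp y i)"
  proof (rule hcomp_unique)
    show "finite {i. hcomp y i \<noteq> 0}" by (rule hcomp_finite)
    show "x * hcomp y i \<in> ag i" for i using homogeneous_mult[OF x hcomp_in[of y i]] by simp
    show "x * y = (\<Sum>i\<in>{i. hcomp y i \<noteq> 0}. x * hcomp y i)"
      using hcomp[of y] by (metis sum_distrib_left)
  qed simp
  then show ?thesis by simp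
qed

lemma sum_homogeneous_eq_0:
  assumes "finite D" "\<And>d. d \<in> D \<Longrightarrow> y d \<in> ag d" "sum y D = 0" "d \<in> D"
  shows "y d = 0"
proof -
  have "hcomp (sum y D) d = (\<Sum>d'\<in>D. if d' = d then y d else 0)"
    unfolding hcomp_sum
  proof (intro sum.cong refl)
    fix d' assume "d' \<in> D"
    then show "hcomp (y d') d = (if d' = d then y d else 0)"
      using hcomp_homogeneous[OF assms(2)] by auto
  qed
  then show ?thesis using assms by (simp add: hcomp_zero)
qed

lemma alg_ge_subspace: "alg.subspace (alg_ge sa ag d)"
  unfolding alg_ge_def by simp

lemma homogeneous_in_alg_ge: "d \<le> e \<Longrightarrow> x \<in> ag e \<Longrightarrow> x \<in> alg_ge sa ag d"
  unfolding alg_ge_def by (rule alg.span_base) auto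

lemma hcomp_alg_ge: "x \<in> alg_ge sa ag d \<Longrightarrow> i < d \<Longrightarrow> hcomp x i = 0"
proof -
  assume x: "x \<in> alg_ge sa ag d" and i: "i < d"
  have "alg.subspace {x. hcomp x i = 0}"
    unfolding alg.subspace_def by (auto simp: hcomp_add hcomp_scale hcomp_zero)
  moreover have "(\<Union>e\<in>{d..}. ag e) \<subseteq> {x. hcomp x i = 0}"
    using i by (auto simp: hcomp_homogeneous)
  ultimately have "alg_ge sa ag d \<subseteq> {x. hcomp x i = 0}"
    unfolding alg_ge_def by (intro alg.span_minimal)
  then show ?thesis using x by blast
qed

lemma alg_geI: "(\<And>i. i < d \<Longrightarrow> hcomp x i = 0) \<Longrightarrow> x \<in> alg_ge sa ag d"
proof -
  assume low: "\<And>i. i < d \<Longrightarrow> hcomp x i = 0"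
  have "x = sum (hcomp x) {i. hcomp x i \<noteq> 0}" using hcomp by blast
  also have "\<dots> \<in> alg_ge sa ag d"
  proof (rule alg.subspace_sum[OF alg_ge_subspace])
    fix i assume "i \<in> {i. hcomp x i \<noteq> 0}"
    then have "d \<le> i" using low not_less by auto
    then show "hcomp x i \<in> alg_ge sa ag d" using homogeneous_in_alg_ge hcomp_in by blast
  qed
  finally show ?thesis .
qed

lemma alg_ge_0: "x \<in> alg_ge sa ag 0"
  by (rule alg_geI) simp

lemma alg_ge_1_iff: "x \<in> alg_ge sa ag 1 \<longleftrightarrow> hcomp x 0 = 0"
  using alg_geI[of 1 x] hcomp_alg_ge[of x 1 0] by auto

lemma diff_hcomp_0_in_alg_ge_1: "x - hcomp x 0 \<in> alg_ge sa ag 1"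
  by (subst alg_ge_1_iff) (simp add: hcomp_diff hcomp_homogeneous[OF hcomp_in])

lemma alg_ge_mult:
  assumes x: "x \<in> alg_ge sa ag d" and y: "y \<in> alg_ge sa ag e"
  shows "x * y \<in> alg_ge sa ag (d + e)"
proof -
  let ?S = "{i. hcomp x i \<noteq> 0}" and ?T = "{i. hcomp y i \<noteq> 0}"
  have "x * y = sum (hcomp x) ?S * sum (hcomp y) ?T" using hcomp[of x] hcomp[of y] by argo
  also have "\<dots> = (\<Sum>i\<in>?S. \<Sum>j\<in>?T. hcomp x i * hcomp y j)" by (rule sum_product)
  also have "\<dots> \<in> alg_ge sa ag (d + e)"
  proof (intro alg.subspace_sum[OF alg_ge_subspace])
    fix i j assume "i \<in> ?S" "j \<in> ?T"
    then have "d \<le> i" "e \<le> j" using hcomp_alg_ge[OF x] hcomp_alg_ge[OF y] not_less by auto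
    then show "hcomp x i * hcomp y j \<in> alg_ge sa ag (d + e)"
      using homogeneous_in_alg_ge[OF _ homogeneous_mult[OF hcomp_in hcomp_in]] by simp
  qed
  finally show ?thesis .
qed

text \<open>Finite dimension forces the grading to be bounded, so \<open>\<aa>\<^sub>\<ge>\<^sub>1\<close> is nilpotent.\<close>

lemma nonzero_homogeneous_independent:
  assumes x: "\<And>d. d \<in> Z \<Longrightarrow> x d \<in> ag d \<and> x d \<noteq> 0"
  shows "inj_on x Z" and "alg.independent (x ` Z)"
proof -
  have hx: "hcomp (x e) d = (if d = e then x e else 0)" if "e \<in> Z" for d e
    using hcomp_homogeneous[of "x e" e] x[OF that] by simp
  show inj: "inj_on x Z"
  proof (rule inj_onI)
    fix d e assume "d \<in> Z" "e \<in> Z" "x d = x e"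
    then show "d = e" using hx[of d d] hx[of e d] x by (metis (full_types))
  qed
  show "alg.independent (x ` Z)"
    unfolding alg.independent_explicit_module
  proof (intro allI impI)
    fix t u v assume t: "finite t" "t \<subseteq> x ` Z" and s: "(\<Sum>v\<in>t. sa (u v) v) = 0" and v: "v \<in> t"
    obtain d where d: "d \<in> Z" "v = x d" using t v by blast
    have "hcomp (\<Sum>w\<in>t. sa (u w) w) d = (\<Sum>w\<in>t. if w = v then sa (u v) v else 0)"
      unfolding hcomp_sum hcomp_scale
    proof (intro sum.cong refl)
      fix w assume "w \<in> t"
      then obtain e where e: "e \<in> Z" "w = x e" using t by blast
      show "sa (u w) (hcomp w d) = (if w = v then sa (u v) v else 0)"
      proof (cases "e = d")
        case True then show ?thesis using e d hx[of d d] by simp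
      next
        case False
        then have "w \<noteq> v" using inj e d inj_onD by metis
        then show ?thesis using hx[of e d] e False by simp
      qed
    qed
    then have "sa (u v) v = 0" using s v t(1) by (simp add: hcomp_zero)
    then show "u v = 0" using x[OF d(1)] d(2) by simp
  qed
qed

lemma homogeneous_eventually_0: "\<exists>D. \<forall>d\<ge>D. ag d = {0}"
proof -
  let ?Z = "{d. ag d \<noteq> {0}}"
  define x where "x d = (SOME x. x \<in> ag d \<and> x \<noteq> 0)" for d
  have x: "x d \<in> ag d \<and> x d \<noteq> 0" if "d \<in> ?Z" for d
  proof -
    have "\<exists>y. y \<in> ag d \<and> y \<noteq> 0" using that zero_homogeneous[of d] by auto
    then show ?thesis unfolding x_def by (rule someI_ex)
  qed
  obtain B where B: "finite B" "alg.span B = UNIV"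
    using k_algebra unfolding k_algebra_def fin_dim_def by blast
  have "alg.independent (x ` ?Z)" by (rule nonzero_homogeneous_independent(2)) (rule x)
  then have "finite (x ` ?Z)" using alg.independent_span_bound[OF B(1)] B(2) by auto
  then have "finite ?Z" using finite_imageD nonzero_homogeneous_independent(1)[OF x] by blast
  then obtain D where "\<forall>d\<in>?Z. d < D" using finite_nat_set_iff_bounded by blast
  then show ?thesis by (meson mem_Collect_eq not_le)
qed

lemma alg_ge_eventually_0: "\<exists>D. alg_ge sa ag D = {0}"
proof -
  obtain D where D: "\<forall>d\<ge>D. ag d = {0}" using homogeneous_eventually_0 by blast
  have "(\<Union>d\<in>{D..}. ag d) = {0}" using D by auto
  then have "alg_ge sa ag D = {0}"
    unfolding alg_ge_def using alg.span_eq_iff[of "{0}"] alg.subspace_single_0 by simp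
  then show ?thesis by blast
qed

lemma fixed_by_alg_ge_1_matrix:
  assumes fixed: "\<And>j. g j = (\<Sum>l<n. g l * M l j)" and M: "\<And>l j. M l j \<in> alg_ge sa ag 1"
  shows "g j = 0"
proof -
  have "\<forall>j. g j \<in> alg_ge sa ag t" for t
  proof (induction t)
    case 0 then show ?case using alg_ge_0 by blast
  next
    case (Suc t)
    have "g j \<in> alg_ge sa ag (t + 1)" for j
      unfolding fixed[of j] using Suc M by (intro alg.subspace_sum[OF alg_ge_subspace] alg_ge_mult) auto
    then show ?case by simp
  qed
  moreover obtain D where "alg_ge sa ag D = {0}" using alg_ge_eventually_0 by blast
  ultimately show ?thesis by blast
qed

end

definition free_basis :: "nat \<Rightarrow> nat \<Rightarrow> 'a::ring_1" where
  "free_basis l = (\<lambda>j. if j = l then 1 else 0)"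

lemma free_basis_in_free_amod: "l < n \<Longrightarrow> free_basis l \<in> free_amod n"
  unfolding free_basis_def free_amod_def by auto

lemma zero_in_free_amod: "(\<lambda>j. 0) \<in> free_amod n"
  unfolding free_amod_def by simp

lemma free_amod_sum: "(\<And>l. l \<in> L \<Longrightarrow> g l \<in> free_amod n) \<Longrightarrow> (\<lambda>j. \<Sum>l\<in>L. g l j) \<in> free_amod n"
  unfolding free_amod_def by simp

lemma free_amod_mult: "g \<in> free_amod n \<Longrightarrow> (\<lambda>j. x * g j) \<in> free_amod n"
  unfolding free_amod_def by simp

lemma free_amod_expand: "g \<in> free_amod n \<Longrightarrow> g = (\<lambda>j. \<Sum>l<n. g l * free_basis l j)"
  unfolding free_amod_def free_basis_def by (auto simp: fun_eq_iff if_distrib cong: if_cong)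

definition quot_splitting :: "('A \<Rightarrow> 'm::ab_group_add \<Rightarrow> 'm) \<Rightarrow> ('a::ring_1 \<Rightarrow> 'A)
    \<Rightarrow> 'm set \<Rightarrow> 'm set \<Rightarrow> nat \<Rightarrow> ((nat \<Rightarrow> 'a) \<Rightarrow> 'm) \<Rightarrow> ('m \<Rightarrow> nat \<Rightarrow> 'a) \<Rightarrow> bool" where
  "quot_splitting act f U V n p s \<longleftrightarrow>
     (\<forall>g\<in>free_amod n. p g \<in> U) \<and>
     (\<forall>g\<in>free_amod n. \<forall>h\<in>free_amod n. p (\<lambda>i. g i + h i) = p g + p h) \<and>
     (\<forall>g\<in>free_amod n. \<forall>x. p (\<lambda>i. x * g i) = act (f x) (p g)) \<and>
     (\<forall>u\<in>U. s u \<in> free_amod n) \<and>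
     (\<forall>u\<in>U. \<forall>w\<in>U. s (u + w) = (\<lambda>i. s u i + s w i)) \<and>
     (\<forall>u\<in>U. \<forall>x. s (act (f x) u) = (\<lambda>i. x * s u i)) \<and>
     (\<forall>v\<in>V. s v = (\<lambda>i. 0)) \<and>
     (\<forall>u\<in>U. p (s u) - u \<in> V)"

lemma proj_quot_iff_splitting: "proj_quot act f U V \<longleftrightarrow> (\<exists>n p s. quot_splitting act f U V n p s)"
  unfolding proj_quot_def quot_splitting_def by simp

locale filtered_surjection = fin_graded_algebra sa ag
  for sa :: "'k::field \<Rightarrow> 'a::ring_1 \<Rightarrow> 'a" and ag :: "nat \<Rightarrow> 'a set" +
  fixes sA :: "'k \<Rightarrow> 'A::ring_1 \<Rightarrow> 'A" and f :: "'a \<Rightarrow> 'A"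
    and sR :: "'k \<Rightarrow> 'r::ab_group_add \<Rightarrow> 'r" and actR :: "'A \<Rightarrow> 'r \<Rightarrow> 'r"
    and F :: "int \<Rightarrow> 'r set"
    and sN :: "'k \<Rightarrow> 'n::ab_group_add \<Rightarrow> 'n" and actN :: "'A \<Rightarrow> 'n \<Rightarrow> 'n"
    and NG :: "int \<Rightarrow> 'n set"
    and m :: int and \<phi> :: "'r \<Rightarrow> 'n"
  assumes alg_A: "k_algebra sA" and hom_f: "alg_hom sa sA f"
    and ideals: "ideal_condition sa ag sA f"
    and mod_R: "alg_module sA sR actR"
    and filt_sub: "\<forall>i. A_submodule sR actR (F i)"
    and filt_dec: "\<forall>i. F (i + 1) \<subseteq> F i"
    and filt_low: "\<exists>i0. \<forall>i\<le>i0. F i = UNIV"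
    and filt_proj: "\<forall>i. proj_quot actR f (F i) (F (i + 1))"
    and N_adm: "admissible_hybrid sA sN actN f ag NG"
    and gen_m: "act_span sN actN f UNIV (NG m) = mod_ge sN NG m"
    and phi_hom: "A_hom sR actR sN actN \<phi>"
    and phi_filt: "\<forall>i\<le>m. \<phi> ` F i = mod_ge sN NG i"
    and F_vanish: "\<forall>i>m. F i = {0}"
begin

lemma mod_N: "alg_module sA sN actN"
  using N_adm unfolding admissible_hybrid_def by blast

sublocale A: vector_space sA using alg_A unfolding k_algebra_def by blast
sublocale R: vector_space sR using mod_R unfolding alg_module_def by blast
sublocale N: vector_space sN using mod_N unfolding alg_module_def by blast
sublocale phi: module_hom sR sN \<phi>
  using phi_hom unfolding A_hom_def module_hom_iff_linear linear_iff
  using R.vector_space_axioms N.vector_space_axioms by blast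

lemma phi_act: "\<phi> (actR z v) = actN z (\<phi> v)"
  using phi_hom unfolding A_hom_def by blast

lemma act_one: "actR 1 v = v"
  and act_mult: "actR (x * y) v = actR x (actR y v)"
  using mod_R unfolding alg_module_def by blast+

lemma act_hom: "module_hom sR sR (actR z)"
  using mod_R R.vector_space_axioms
  unfolding alg_module_def module_hom_iff_linear linear_iff by blast

lemma act_left_hom: "module_hom sA sR (\<lambda>z. actR z v)"
  using mod_R R.vector_space_axioms A.vector_space_axioms
  unfolding alg_module_def module_hom_iff_linear linear_iff by blast

lemmas act_diff = module_hom.diff[OF act_hom]
  and act_sum = module_hom.sum[OF act_hom]
  and act_subspace_vimage = module_hom.subspace_vimage[OF act_hom]
  and act_left_subspace_vimage = module_hom.subspace_vimage[OF act_left_hom]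

lemma f_hom: "module_hom sa sA f"
  using hom_f alg.vector_space_axioms A.vector_space_axioms
  unfolding alg_hom_def module_hom_iff_linear linear_iff by blast

lemma f_one: "f 1 = 1" and f_mult: "f (x * y) = f x * f y"
  using hom_f unfolding alg_hom_def by blast+

abbreviation rho :: "'a \<Rightarrow> 'r \<Rightarrow> 'r" where "rho x \<equiv> actR (f x)"

lemma rho_hom: "module_hom sa sR (\<lambda>x. rho x v)"
  using module_hom_compose[OF f_hom act_left_hom] by (simp add: comp_def)

lemmas rho_add = module_hom.add[OF rho_hom]
  and rho_diff = module_hom.diff[OF rho_hom]
  and rho_scale = module_hom.scale[OF rho_hom]
  and rho_sum = module_hom.sum[OF rho_hom]
  and rho_subspace_vimage = module_hom.subspace_vimage[OF rho_hom]

lemma rho_mult: "rho (x * y) v = rho x (rho y v)"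
  by (simp add: f_mult act_mult)

lemma rho_one: "rho 1 v = v"
  by (simp add: f_one act_one)

lemma scale_eq_rho: "sR c v = rho (sa c 1) v"
  using rho_scale[of c 1 v] by (simp add: rho_one)

lemma actN_diff_left: "actN (x - y) v = actN x v - actN y v"
  using mod_N unfolding alg_module_def by (metis add_diff_cancel eq_diff_eq)

lemma graded_N: "graded_amod sN actN f ag NG"
  using N_adm unfolding admissible_hybrid_def by blast

lemma NG_subspace: "N.subspace (NG j)"
  using graded_N unfolding graded_amod_def is_dsum_def by blast

lemma NG_act: "x \<in> ag i \<Longrightarrow> v \<in> NG j \<Longrightarrow> actN (f x) v \<in> NG (j + int i)"
  using graded_N unfolding graded_amod_def by blast

lemma F_subspace: "R.subspace (F i)"
  using filt_sub unfolding A_submodule_def by blast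

lemma F_act: "v \<in> F i \<Longrightarrow> actR z v \<in> F i"
  using filt_sub unfolding A_submodule_def by blast

lemma zero_in_F: "0 \<in> F i"
  using F_subspace R.subspace_0 by blast

lemma F_antimono: "i \<le> j \<Longrightarrow> F j \<subseteq> F i"
proof (induction j rule: int_ge_induct)
  case (step j)
  then show ?case using filt_dec by blast
qed simp

lemma rad_flat_eq: "rad_flat sa ag sR actR f X = R.span {rho x v | x v. x \<in> alg_ge sa ag 1 \<and> v \<in> X}"
  unfolding rad_flat_def act_span_def by simp

definition radF :: "int \<Rightarrow> 'r set" where
  "radF i = R.span (F (i + 1) \<union> rad_flat sa ag sR actR f (F i))"

lemma radF_subspace: "R.subspace (radF i)"
  unfolding radF_def by simp

lemma F_succ_subset_radF: "F (i + 1) \<subseteq> radF i"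
  unfolding radF_def by (blast intro: R.span_base)

lemma rho_alg_ge_1_in_radF: "x \<in> alg_ge sa ag 1 \<Longrightarrow> v \<in> F i \<Longrightarrow> rho x v \<in> radF i"
  unfolding radF_def rad_flat_eq by (blast intro: R.span_base)

lemma radF_subset_F: "radF i \<subseteq> F i"
proof -
  have "rad_flat sa ag sR actR f (F i) \<subseteq> F i"
    unfolding rad_flat_eq by (rule R.span_minimal[OF _ F_subspace]) (auto intro: F_act)
  then show ?thesis
    using filt_dec unfolding radF_def by (intro R.span_minimal[OF _ F_subspace]) auto
qed

lemma rho_radF:
  assumes w: "w \<in> radF i" shows "rho y w \<in> radF i"
proof -
  have S: "R.subspace {v. rho y v \<in> radF i}"
    using act_subspace_vimage[OF radF_subspace] by (simp add: vimage_def)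
  have "{rho x v | x v. x \<in> alg_ge sa ag 1 \<and> v \<in> F i} \<subseteq> {v. rho y v \<in> radF i}"
  proof clarify
    fix x v assume "x \<in> alg_ge sa ag 1" "v \<in> F i"
    then have "rho (y * x) v \<in> radF i"
      using alg_ge_mult[OF alg_ge_0] rho_alg_ge_1_in_radF by fastforce
    then show "rho y (rho x v) \<in> radF i" by (simp add: rho_mult)
  qed
  then have "rad_flat sa ag sR actR f (F i) \<subseteq> {v. rho y v \<in> radF i}"
    unfolding rad_flat_eq by (rule R.span_minimal[OF _ S])
  moreover have "F (i + 1) \<subseteq> {v. rho y v \<in> radF i}"
    using F_act F_succ_subset_radF by blast
  ultimately have "R.span (F (i + 1) \<union> rad_flat sa ag sR actR f (F i)) \<subseteq> {v. rho y v \<in> radF i}"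
    by (intro R.span_minimal[OF _ S]) auto
  then show ?thesis using w unfolding radF_def[of i] by blast
qed

text \<open>For \<open>i = m\<close> this is where \<open>\<aa>N\<^sub>m = N\<^sub>\<ge>\<^sub>m\<close> enters: an element of
  \<open>N\<^sub>\<ge>\<^sub>m\<close> is a sum of \<open>x \<cdot> \<phi> u\<close>, and the positive-degree part of \<open>x\<close> moves \<open>u\<close> into \<open>radF m\<close>.\<close>

lemma mod_ge_subset_NG_plus_radF:
  assumes "i \<le> m"
  shows "mod_ge sN NG i \<subseteq> {u + v | u v. u \<in> NG i \<and> v \<in> \<phi> ` radF i}"
    (is "_ \<subseteq> ?Z")
proof -
  have Z: "N.subspace ?Z"
    by (rule N.subspace_sums[OF NG_subspace phi.subspace_image[OF radF_subspace]])
  have in_Z: "n \<in> ?Z" if "w \<in> radF i" "n - \<phi> w \<in> NG i" for n w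
    using that by (intro CollectI exI[of _ "n - \<phi> w"] exI[of _ "\<phi> w"]) auto
  show ?thesis
  proof (cases "i = m")
    case True
    have "{actN (f x) v | x v. x \<in> UNIV \<and> v \<in> NG m} \<subseteq> ?Z"
    proof
      fix y assume "y \<in> {actN (f x) v | x v. x \<in> UNIV \<and> v \<in> NG m}"
      then obtain x v where y: "y = actN (f x) v" and v: "v \<in> NG m" by blast
      from v have "v \<in> mod_ge sN NG m" unfolding mod_ge_def by (blast intro: N.span_base)
      then obtain u where u: "u \<in> F m" "v = \<phi> u" using phi_filt by auto
      have "actN (f x) v - \<phi> (rho (x - hcomp x 0) u) = actN (f (hcomp x 0)) v"
        using u by (simp add: phi_act module_hom.diff[OF f_hom] actN_diff_left)
      also have "\<dots> \<in> NG m" using NG_act[OF hcomp_in[of x 0] v] by simp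
      finally have "actN (f x) v - \<phi> (rho (x - hcomp x 0) u) \<in> NG i" using True by simp
      moreover have "rho (x - hcomp x 0) u \<in> radF i"
        using rho_alg_ge_1_in_radF[OF diff_hcomp_0_in_alg_ge_1 u(1)] True by simp
      ultimately show "y \<in> ?Z" unfolding y by (rule in_Z[rotated])
    qed
    then have "N.span {actN (f x) v | x v. x \<in> UNIV \<and> v \<in> NG m} \<subseteq> ?Z"
      by (rule N.span_minimal[OF _ Z])
    then show ?thesis using True gen_m unfolding act_span_def by simp
  next
    case False
    have "(\<Union>j\<in>{i..}. NG j) \<subseteq> ?Z"
    proof
      fix n assume "n \<in> (\<Union>j\<in>{i..}. NG j)"
      then obtain j where j: "i \<le> j" and n: "n \<in> NG j" by blast
      show "n \<in> ?Z"
      proof (cases "j = i")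
        case True
        then show ?thesis using in_Z[of 0 n] R.subspace_0[OF radF_subspace] n by simp
      next
        case False
        then have "n \<in> mod_ge sN NG (i + 1)"
          unfolding mod_ge_def using j n by (intro N.span_base) auto
        moreover have "i + 1 \<le> m" using \<open>i \<le> m\<close> \<open>i \<noteq> m\<close> by simp
        ultimately have "n \<in> \<phi> ` F (i + 1)" using phi_filt by simp
        then obtain u where "u \<in> radF i" "n = \<phi> u" using F_succ_subset_radF by blast
        then show ?thesis using in_Z[of u n] N.subspace_0[OF NG_subspace] by simp
      qed
    qed
    then show ?thesis unfolding mod_ge_def by (rule N.span_minimal[OF _ Z])
  qed
qed

lemma exists_lift_mod_radF: "r \<in> F i \<Longrightarrow> \<exists>q\<in>F i. \<phi> q \<in> NG i \<and> r - q \<in> radF i"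
proof -
  assume r: "r \<in> F i"
  show ?thesis
  proof (cases "i \<le> m")
    case True
    then have "\<phi> r \<in> mod_ge sN NG i" using phi_filt r by blast
    then obtain u w where uw: "u \<in> NG i" "w \<in> radF i" "\<phi> r = u + \<phi> w"
      using mod_ge_subset_NG_plus_radF[OF True] by blast
    have "r - w \<in> F i" using r uw(2) radF_subset_F R.subspace_diff[OF F_subspace] by blast
    moreover have "\<phi> (r - w) \<in> NG i" using uw by (simp add: phi.diff)
    ultimately show ?thesis using uw(2) by (intro bexI[of _ "r - w"]) auto
  next
    case False
    then have "r = 0" using F_vanish r by simp
    then show ?thesis
      using zero_in_F R.subspace_0[OF radF_subspace] N.subspace_0[OF NG_subspace]
      by (intro bexI[of _ 0]) simp_all
  qed
qed

lemma splitting_data_exists: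
  "\<exists>nn pp ss qq. \<forall>i. quot_splitting actR f (F i) (F (i + 1)) (nn i) (pp i) (ss i) \<and>
     (\<forall>l<nn i. qq i l \<in> F i \<and> \<phi> (qq i l) \<in> NG i \<and> pp i (free_basis l) - qq i l \<in> radF i)"
proof -
  obtain nn pp ss where split: "\<And>i. quot_splitting actR f (F i) (F (i + 1)) (nn i) (pp i) (ss i)"
    using filt_proj unfolding proj_quot_iff_splitting by metis
  have "pp i (free_basis l) \<in> F i" if "l < nn i" for i l
    using split[of i] free_basis_in_free_amod[OF that] unfolding quot_splitting_def by blast
  then have lift: "\<forall>l. \<exists>q. l < nn i \<longrightarrow> q \<in> F i \<and> \<phi> q \<in> NG i \<and> pp i (free_basis l) - q \<in> radF i"
    for i using exists_lift_mod_radF by blast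
  have "\<forall>i. \<exists>qi. \<forall>l. l < nn i \<longrightarrow> qi l \<in> F i \<and> \<phi> (qi l) \<in> NG i \<and> pp i (free_basis l) - qi l \<in> radF i"
    using choice[OF lift] by blast
  from choice[OF this] obtain qq where "\<forall>i l. l < nn i \<longrightarrow> qq i l \<in> F i \<and> \<phi> (qq i l) \<in> NG i
      \<and> pp i (free_basis l) - qq i l \<in> radF i" ..
  then show ?thesis using split by blast
qed

end

locale split_filtered_surjection = filtered_surjection sa ag sA f sR actR F sN actN NG m \<phi>
  for sa :: "'k::field \<Rightarrow> 'a::ring_1 \<Rightarrow> 'a" and ag :: "nat \<Rightarrow> 'a set"
    and sA :: "'k \<Rightarrow> 'A::ring_1 \<Rightarrow> 'A" and f :: "'a \<Rightarrow> 'A"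
    and sR :: "'k \<Rightarrow> 'r::ab_group_add \<Rightarrow> 'r" and actR :: "'A \<Rightarrow> 'r \<Rightarrow> 'r"
    and F :: "int \<Rightarrow> 'r set"
    and sN :: "'k \<Rightarrow> 'n::ab_group_add \<Rightarrow> 'n" and actN :: "'A \<Rightarrow> 'n \<Rightarrow> 'n"
    and NG :: "int \<Rightarrow> 'n set"
    and m :: int and \<phi> :: "'r \<Rightarrow> 'n" +
  fixes nn :: "int \<Rightarrow> nat" and pp :: "int \<Rightarrow> (nat \<Rightarrow> 'a) \<Rightarrow> 'r"
    and ss :: "int \<Rightarrow> 'r \<Rightarrow> nat \<Rightarrow> 'a" and qq :: "int \<Rightarrow> nat \<Rightarrow> 'r"
  assumes splitting: "quot_splitting actR f (F i) (F (i + 1)) (nn i) (pp i) (ss i)"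
    and lift_F: "l < nn i \<Longrightarrow> qq i l \<in> F i"
    and lift_NG: "l < nn i \<Longrightarrow> \<phi> (qq i l) \<in> NG i"
    and lift_radF: "l < nn i \<Longrightarrow> pp i (free_basis l) - qq i l \<in> radF i"
begin

lemma p_in_F: "g \<in> free_amod (nn i) \<Longrightarrow> pp i g \<in> F i"
  and p_add: "g \<in> free_amod (nn i) \<Longrightarrow> h \<in> free_amod (nn i) \<Longrightarrow> pp i (\<lambda>j. g j + h j) = pp i g + pp i h"
  and p_mult: "g \<in> free_amod (nn i) \<Longrightarrow> pp i (\<lambda>j. x * g j) = rho x (pp i g)"
  and s_free: "u \<in> F i \<Longrightarrow> ss i u \<in> free_amod (nn i)"
  and s_add: "u \<in> F i \<Longrightarrow> w \<in> F i \<Longrightarrow> ss i (u + w) = (\<lambda>j. ss i u j + ss i w j)"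
  and s_mult: "u \<in> F i \<Longrightarrow> ss i (rho x u) = (\<lambda>j. x * ss i u j)"
  and s_F_succ: "v \<in> F (i + 1) \<Longrightarrow> ss i v = (\<lambda>j. 0)"
  and p_s: "u \<in> F i \<Longrightarrow> pp i (ss i u) - u \<in> F (i + 1)"
  using splitting[of i] unfolding quot_splitting_def by blast+

lemma s_zero: "ss i 0 = (\<lambda>j. 0)"
  by (rule s_F_succ[OF zero_in_F])

lemma s_scale: "u \<in> F i \<Longrightarrow> ss i (sR c u) = (\<lambda>j. sa c (ss i u j))"
  using s_mult[of u i "sa c 1"] by (simp add: scale_eq_rho scale_eq_mult[symmetric])

lemma s_sum: "finite L \<Longrightarrow> (\<And>l. l \<in> L \<Longrightarrow> g l \<in> F i) \<Longrightarrow> ss i (sum g L) = (\<lambda>j. \<Sum>l\<in>L. ss i (g l) j)"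
proof (induction L rule: finite_induct)
  case (insert a L)
  then have "sum g L \<in> F i" using R.subspace_sum[OF F_subspace] by blast
  then show ?case using insert by (simp add: s_add)
qed (simp add: s_zero)

lemma s_diff: "u \<in> F i \<Longrightarrow> w \<in> F i \<Longrightarrow> ss i (u - w) = (\<lambda>j. ss i u j - ss i w j)"
  using s_add[of "u - w" i w] R.subspace_diff[OF F_subspace] by (simp add: fun_eq_iff eq_diff_eq)

lemma p_sum: "finite L \<Longrightarrow> (\<And>l. l \<in> L \<Longrightarrow> g l \<in> free_amod (nn i)) \<Longrightarrow>
    pp i (\<lambda>j. \<Sum>l\<in>L. g l j) = (\<Sum>l\<in>L. pp i (g l))"
proof (induction L rule: finite_induct)
  case empty
  then show ?case using p_add[OF zero_in_free_amod zero_in_free_amod, of i] by simp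
next
  case (insert a L)
  then show ?case by (simp add: p_add free_amod_sum)
qed

lemma p_expand: "g \<in> free_amod (nn i) \<Longrightarrow> pp i g = (\<Sum>l<nn i. rho (g l) (pp i (free_basis l)))"
  by (subst free_amod_expand, assumption, subst p_sum)
    (auto simp: p_mult free_basis_in_free_amod free_amod_mult)

definition coord0 :: "int \<Rightarrow> 'r \<Rightarrow> nat \<Rightarrow> 'a" where
  "coord0 i v = (\<lambda>l. hcomp (ss i v l) 0)"

definition comb :: "int \<Rightarrow> (nat \<Rightarrow> 'a) \<Rightarrow> 'r" where
  "comb i g = (\<Sum>l<nn i. rho (g l) (qq i l))"

definition proj :: "int \<Rightarrow> 'r \<Rightarrow> 'r" where
  "proj i v = comb i (coord0 i v)"

definition hcompl :: "int \<Rightarrow> 'r set" where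
  "hcompl i = proj i ` F i"

lemma coord0_degree_0: "coord0 i v l \<in> ag 0"
  unfolding coord0_def by (rule hcomp_in)

lemma coord0_add: "u \<in> F i \<Longrightarrow> w \<in> F i \<Longrightarrow> coord0 i (u + w) = (\<lambda>l. coord0 i u l + coord0 i w l)"
  unfolding coord0_def by (simp add: s_add hcomp_add)

lemma coord0_diff: "u \<in> F i \<Longrightarrow> w \<in> F i \<Longrightarrow> coord0 i (u - w) = (\<lambda>l. coord0 i u l - coord0 i w l)"
  unfolding coord0_def by (simp add: s_diff hcomp_diff)

lemma coord0_scale: "u \<in> F i \<Longrightarrow> coord0 i (sR c u) = (\<lambda>l. sa c (coord0 i u l))"
  unfolding coord0_def by (simp add: s_scale hcomp_scale)

lemma coord0_rho: "x \<in> ag 0 \<Longrightarrow> u \<in> F i \<Longrightarrow> coord0 i (rho x u) = (\<lambda>l. x * coord0 i u l)"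
  unfolding coord0_def by (simp add: s_mult hcomp_mult_degree_0)

lemma coord0_zero: "coord0 i 0 = (\<lambda>l. 0)"
  unfolding coord0_def by (simp add: s_zero hcomp_zero)

lemma coord0_radF: "w \<in> radF i \<Longrightarrow> coord0 i w = (\<lambda>l. 0)"
proof -
  let ?K = "{w. w \<in> F i \<and> coord0 i w = (\<lambda>l. 0)}"
  have K: "R.subspace ?K"
    unfolding R.subspace_def
    by (auto simp: zero_in_F coord0_zero coord0_add coord0_scale
        intro: R.subspace_add[OF F_subspace] R.subspace_scale[OF F_subspace])
  have "rho x v \<in> ?K" if "x \<in> alg_ge sa ag 1" "v \<in> F i" for x v
  proof -
    have "hcomp (x * ss i v l) 0 = 0" for l
      using alg_ge_1_iff alg_ge_mult[OF that(1) alg_ge_0] by (metis add.right_neutral)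
    then show ?thesis using that F_act by (simp add: coord0_def s_mult)
  qed
  then have "rad_flat sa ag sR actR f (F i) \<subseteq> ?K"
    unfolding rad_flat_eq by (intro R.span_minimal[OF _ K]) blast
  moreover have "F (i + 1) \<subseteq> ?K"
    using filt_dec by (auto simp: coord0_def s_F_succ hcomp_zero)
  ultimately have "radF i \<subseteq> ?K"
    unfolding radF_def by (intro R.span_minimal[OF _ K]) blast
  then show "w \<in> radF i \<Longrightarrow> coord0 i w = (\<lambda>l. 0)" by blast
qed

lemma comb_in_F: "comb i g \<in> F i"
  unfolding comb_def by (rule R.subspace_sum[OF F_subspace]) (simp add: F_act lift_F)

lemma comb_add: "comb i (\<lambda>l. g l + h l) = comb i g + comb i h"
  unfolding comb_def by (simp add: rho_add sum.distrib)

lemma comb_scale: "comb i (\<lambda>l. sa c (g l)) = sR c (comb i g)"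
  unfolding comb_def by (simp add: rho_scale R.scale_sum_right)

lemma comb_zero: "comb i (\<lambda>l. 0) = 0"
  unfolding comb_def by (simp add: module_hom.zero[OF rho_hom])

lemma rho_comb: "rho x (comb i g) = comb i (\<lambda>l. x * g l)"
  unfolding comb_def by (simp add: act_sum rho_mult)

lemma comb_sum: "comb i (\<lambda>l. \<Sum>d\<in>D. g d l) = (\<Sum>d\<in>D. comb i (g d))"
  unfolding comb_def rho_sum by (rule sum.swap)

lemma phi_comb_NG: "(\<And>l. g l \<in> ag 0) \<Longrightarrow> \<phi> (comb i g) \<in> NG i"
  unfolding comb_def phi.sum phi_act
  using NG_act[OF _ lift_NG] by (intro N.subspace_sum[OF NG_subspace]) fastforce

lemma s_comb: "ss i (comb i g) = (\<lambda>j. \<Sum>l<nn i. g l * ss i (qq i l) j)"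
  unfolding comb_def by (subst s_sum) (auto simp: F_act lift_F s_mult)

lemma proj_in_F: "proj i v \<in> F i"
  unfolding proj_def by (rule comb_in_F)

lemma diff_proj_in_radF:
  assumes v: "v \<in> F i" shows "v - proj i v \<in> radF i"
proof -
  have "v - pp i (ss i v) \<in> radF i"
    using p_s[OF v] F_succ_subset_radF R.subspace_neg[OF radF_subspace] by fastforce
  moreover have "pp i (ss i v) - proj i v \<in> radF i"
  proof -
    have "pp i (ss i v) - proj i v
        = (\<Sum>l<nn i. rho (ss i v l - hcomp (ss i v l) 0) (pp i (free_basis l))
            + rho (hcomp (ss i v l) 0) (pp i (free_basis l) - qq i l))"
      unfolding p_expand[OF s_free[OF v]] proj_def comb_def coord0_def
      by (simp add: sum_subtractf rho_diff act_diff)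
    also have "\<dots> \<in> radF i"
      using rho_alg_ge_1_in_radF[OF diff_hcomp_0_in_alg_ge_1 p_in_F[OF free_basis_in_free_amod]]
        rho_radF[OF lift_radF]
      by (intro R.subspace_sum[OF radF_subspace] R.subspace_add[OF radF_subspace]) auto
    finally show ?thesis .
  qed
  ultimately show ?thesis using R.subspace_add[OF radF_subspace] by fastforce
qed

lemma coord0_proj: "v \<in> F i \<Longrightarrow> coord0 i (proj i v) = coord0 i v"
  using coord0_radF[OF diff_proj_in_radF] coord0_diff[OF _ proj_in_F] by (simp add: fun_eq_iff)

lemma proj_idem: "v \<in> F i \<Longrightarrow> proj i (proj i v) = proj i v"
  by (simp add: proj_def[of i "proj i v"] coord0_proj) (simp add: proj_def)

lemma hcompl_subset_F: "hcompl i \<subseteq> F i"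
  unfolding hcompl_def using proj_in_F by blast

lemma proj_hcompl: "v \<in> hcompl i \<Longrightarrow> proj i v = v"
  unfolding hcompl_def using proj_idem by blast

lemma hcompl_subspace: "R.subspace (hcompl i)"
  unfolding R.subspace_def hcompl_def
proof (intro conjI ballI allI)
  show "0 \<in> proj i ` F i"
    using zero_in_F by (intro image_eqI[of _ _ 0]) (simp_all add: proj_def coord0_zero comb_zero)
next
  fix x y assume "x \<in> proj i ` F i" "y \<in> proj i ` F i"
  then obtain u w where "u \<in> F i" "w \<in> F i" "x = proj i u" "y = proj i w" by blast
  then show "x + y \<in> proj i ` F i"
    using R.subspace_add[OF F_subspace]
    by (intro image_eqI[of _ _ "u + w"]) (simp_all add: proj_def coord0_add comb_add)
next
  fix c x assume "x \<in> proj i ` F i"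
  then obtain u where "u \<in> F i" "x = proj i u" by blast
  then show "sR c x \<in> proj i ` F i"
    using R.subspace_scale[OF F_subspace]
    by (intro image_eqI[of _ _ "sR c u"]) (simp_all add: proj_def coord0_scale comb_scale)
qed

lemma rho_degree_0_hcompl: "x \<in> ag 0 \<Longrightarrow> v \<in> hcompl i \<Longrightarrow> rho x v \<in> hcompl i"
proof -
  assume x: "x \<in> ag 0" and "v \<in> hcompl i"
  then obtain u where u: "u \<in> F i" "v = proj i u" unfolding hcompl_def by blast
  then have "rho x v = proj i (rho x u)"
    unfolding proj_def by (simp add: rho_comb coord0_rho[OF x])
  then show ?thesis unfolding hcompl_def using F_act[OF u(1)] by blast
qed

lemma phi_hcompl: "\<phi> ` hcompl i \<subseteq> NG i"
  unfolding hcompl_def proj_def using phi_comb_NG coord0_degree_0 by blast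

lemma radF_plus_hcompl: "{c + v | c v. c \<in> radF i \<and> v \<in> hcompl i} = F i"
proof
  show "{c + v | c v. c \<in> radF i \<and> v \<in> hcompl i} \<subseteq> F i"
    using radF_subset_F hcompl_subset_F R.subspace_add[OF F_subspace] by blast
  show "F i \<subseteq> {c + v | c v. c \<in> radF i \<and> v \<in> hcompl i}"
  proof
    fix r assume r: "r \<in> F i"
    have "r = (r - proj i r) + proj i r" by simp
    then show "r \<in> {c + v | c v. c \<in> radF i \<and> v \<in> hcompl i}"
      using diff_proj_in_radF[OF r] r unfolding hcompl_def by blast
  qed
qed

lemma radF_inter_hcompl: "radF i \<inter> hcompl i = {0}"
proof -
  have "v = 0" if "v \<in> radF i" "v \<in> hcompl i" for v
    using that proj_hcompl[of v i] coord0_radF[of v i] comb_zero unfolding proj_def by metis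
  then show ?thesis using R.subspace_0[OF radF_subspace] R.subspace_0[OF hcompl_subspace] by blast
qed


definition layer :: "int \<Rightarrow> nat \<Rightarrow> 'r set" where
  "layer i d = R.span {rho x v | x v. x \<in> ag d \<and> v \<in> hcompl i}"

definition emat :: "int \<Rightarrow> (nat \<Rightarrow> 'a) \<Rightarrow> nat \<Rightarrow> 'a" where
  "emat i g = (\<lambda>j. \<Sum>l<nn i. g l * hcomp (ss i (qq i l) j) 0)"

lemma layer_subspace: "R.subspace (layer i d)"
  unfolding layer_def by simp

lemma layer_subset_F: "layer i d \<subseteq> F i"
  unfolding layer_def using hcompl_subset_F F_act by (intro R.span_minimal[OF _ F_subspace]) blast

lemma coord0_comb: "(\<And>l. g l \<in> ag 0) \<Longrightarrow> coord0 i (comb i g) = emat i g"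
  unfolding coord0_def emat_def s_comb by (simp add: hcomp_sum hcomp_mult_degree_0)

lemma emat_add: "emat i (\<lambda>l. g l + h l) = (\<lambda>j. emat i g j + emat i h j)"
  unfolding emat_def by (simp add: distrib_right sum.distrib)

lemma emat_scale: "emat i (\<lambda>l. sa c (g l)) = (\<lambda>j. sa c (emat i g j))"
  unfolding emat_def by (simp add: scale_mult_left[symmetric] alg.scale_sum_right)

lemma emat_mult: "emat i (\<lambda>l. x * g l) = (\<lambda>j. x * emat i g j)"
  unfolding emat_def by (simp add: mult.assoc sum_distrib_left)

lemma emat_sum: "emat i (\<lambda>l. \<Sum>d\<in>D. g d l) = (\<lambda>j. \<Sum>d\<in>D. emat i (g d) j)"
  unfolding emat_def sum_distrib_right by (rule ext, rule sum.swap)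

lemma layer_coordinates:
  assumes "w \<in> layer i d"
  shows "\<exists>g. (\<forall>l. g l \<in> ag d) \<and> emat i g = g \<and> comb i g = w"
proof -
  let ?Q = "{w. \<exists>g. (\<forall>l. g l \<in> ag d) \<and> emat i g = g \<and> comb i g = w}"
  have Q: "R.subspace ?Q" unfolding R.subspace_def
  proof (intro conjI ballI allI)
    show "0 \<in> ?Q"
      using zero_homogeneous by (intro CollectI exI[of _ "\<lambda>l. 0"]) (simp add: emat_def comb_zero)
  next
    fix x y assume "x \<in> ?Q" "y \<in> ?Q"
    then obtain g h where "\<forall>l. g l \<in> ag d" "emat i g = g" "comb i g = x"
      and "\<forall>l. h l \<in> ag d" "emat i h = h" "comb i h = y" by blast
    then show "x + y \<in> ?Q"
      using alg.subspace_add[OF homogeneous_subspace]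
      by (intro CollectI exI[of _ "\<lambda>l. g l + h l"]) (simp add: emat_add comb_add)
  next
    fix c x assume "x \<in> ?Q"
    then obtain g where "\<forall>l. g l \<in> ag d" "emat i g = g" "comb i g = x" by blast
    then show "sR c x \<in> ?Q"
      using alg.subspace_scale[OF homogeneous_subspace]
      by (intro CollectI exI[of _ "\<lambda>l. sa c (g l)"]) (simp add: emat_scale comb_scale)
  qed
  have "rho x v \<in> ?Q" if x: "x \<in> ag d" and v: "v \<in> hcompl i" for x v
  proof -
    have vF: "v \<in> F i" using v hcompl_subset_F by blast
    have "emat i (coord0 i v) = coord0 i v"
      using coord0_comb[OF coord0_degree_0] coord0_proj[OF vF] unfolding proj_def by simp
    moreover have "comb i (\<lambda>l. x * coord0 i v l) = rho x v"
      using proj_hcompl[OF v] rho_comb[of x i "coord0 i v"] unfolding proj_def by simp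
    ultimately show ?thesis
      using homogeneous_mult[OF x coord0_degree_0]
      by (intro CollectI exI[of _ "\<lambda>l. x * coord0 i v l"]) (simp add: emat_mult)
  qed
  then have "layer i d \<subseteq> ?Q" unfolding layer_def by (intro R.span_minimal[OF _ Q]) blast
  then show ?thesis using assms by blast
qed

text \<open>If a sum of elements of distinct layers over the same \<open>i\<close> lies in \<open>F (i + 1)\<close>, their
  summed coordinates \<open>g\<close> satisfy \<open>g = g \<cdot> M\<close> with \<open>M\<close> of positive degree, so \<open>g = 0\<close>;
  homogeneity then separates the summands.\<close>

lemma layer_sum_in_F_succ_eq_0:
  assumes D: "finite D" and w: "\<And>d. d \<in> D \<Longrightarrow> w d \<in> layer i d"
    and s: "(\<Sum>d\<in>D. w d) \<in> F (i + 1)" and d: "d \<in> D"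
  shows "w d = 0"
proof -
  have "\<forall>d\<in>D. \<exists>g. (\<forall>l. g l \<in> ag d) \<and> emat i g = g \<and> comb i g = w d"
    using layer_coordinates w by blast
  from bchoice[OF this] obtain g
    where g: "\<forall>d\<in>D. (\<forall>l. g d l \<in> ag d) \<and> emat i (g d) = g d \<and> comb i (g d) = w d" ..
  define G where "G l = (\<Sum>d\<in>D. g d l)" for l
  have "comb i G = (\<Sum>d\<in>D. w d)" unfolding G_def comb_sum using g by simp
  then have "(\<lambda>j. \<Sum>l<nn i. G l * ss i (qq i l) j) = (\<lambda>j. 0)"
    using s_F_succ[OF s] s_comb[of i G] by simp
  then have s0: "(\<Sum>l<nn i. G l * ss i (qq i l) j) = 0" for j
    by (rule fun_cong)
  have EG: "emat i G = G" unfolding G_def emat_sum using g by (simp add: fun_eq_iff)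
  have "G j = (\<Sum>l<nn i. G l * (hcomp (ss i (qq i l) j) 0 - ss i (qq i l) j))" for j
  proof -
    have "G j = (\<Sum>l<nn i. G l * hcomp (ss i (qq i l) j) 0) - (\<Sum>l<nn i. G l * ss i (qq i l) j)"
      using EG s0[of j] unfolding emat_def by (simp add: fun_eq_iff)
    then show ?thesis by (simp add: sum_subtractf right_diff_distrib)
  qed
  moreover have "hcomp y 0 - y \<in> alg_ge sa ag 1" for y
    using alg.subspace_neg[OF alg_ge_subspace diff_hcomp_0_in_alg_ge_1[of y]] by simp
  ultimately have G0: "G l = 0" for l by (rule fixed_by_alg_ge_1_matrix)
  have "g d l = 0" for l
    using sum_homogeneous_eq_0[OF D _ G0[of l, unfolded G_def] d] g by blast
  then have "g d = (\<lambda>l. 0)" by (rule ext)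
  then show ?thesis using g d comb_zero[of i] by force
qed

lemma lowest_layers_vanish:
  assumes P: "finite P" and w: "\<And>p. p \<in> P \<Longrightarrow> w p \<in> layer (fst p) (snd p)"
    and s: "sum w P = 0" and p: "p \<in> P" "fst p = Min (fst ` P)"
  shows "w p = 0"
proof -
  define i where "i = Min (fst ` P)"
  define P0 where "P0 = {p \<in> P. fst p = i}"
  have P0: "finite P0" "P0 \<subseteq> P" unfolding P0_def using P by auto
  have pair: "(i, snd q) = q" if "q \<in> P0" for q
    using that unfolding P0_def by (cases q) simp
  have "w q \<in> F (i + 1)" if q: "q \<in> P - P0" for q
  proof -
    have "i \<le> fst q" using q P unfolding i_def by simp
    moreover have "fst q \<noteq> i" using q unfolding P0_def by simp
    ultimately have "F (fst q) \<subseteq> F (i + 1)" using F_antimono by simp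
    then show ?thesis using w[of q] q layer_subset_F by blast
  qed
  then have "sum w (P - P0) \<in> F (i + 1)" by (rule R.subspace_sum[OF F_subspace])
  moreover have "sum w P0 = - sum w (P - P0)"
    using s sum.subset_diff[OF P0(2) P, of w] by (simp add: add.commute eq_neg_iff_add_eq_0)
  ultimately have "sum w P0 \<in> F (i + 1)" using R.subspace_neg[OF F_subspace] by simp
  moreover have "inj_on snd P0" using pair by (metis inj_onI)
  then have "sum w P0 = (\<Sum>d\<in>snd ` P0. w (i, d))"
    using pair by (simp add: sum.reindex)
  ultimately have lowest: "w (i, d) = 0" if "d \<in> snd ` P0" for d
  proof (intro layer_sum_in_F_succ_eq_0[OF _ _ _ that])
    fix d assume "d \<in> snd ` P0"
    then obtain q where q: "q \<in> P0" "d = snd q" by blast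
    then show "w (i, d) \<in> layer i d" using w[of q] pair[of q] unfolding P0_def by auto
  qed (use P0 in simp_all)
  have "p \<in> P0" using p unfolding P0_def i_def by simp
  then show ?thesis using lowest[of "snd p"] pair[of p] by simp
qed

lemma layers_independent: "R.independent_subspaces (\<lambda>p. layer (fst p) (snd p))"
proof -
  have "\<forall>p\<in>P. w p = 0"
    if "finite P" "\<forall>p\<in>P. w p \<in> layer (fst p) (snd p)" "sum w P = 0" for P w
    using that
  proof (induction "card (fst ` P)" arbitrary: P rule: less_induct)
    case less
    show ?case
    proof (cases "P = {}")
      case False
      define P1 where "P1 = {p \<in> P. fst p \<noteq> Min (fst ` P)}"
      have P1: "finite P1" "P1 \<subseteq> P" using less.prems(1) unfolding P1_def by auto
      have low: "w p = 0" if "p \<in> P - P1" for p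
        using lowest_layers_vanish[of P w p] less.prems that unfolding P1_def by simp
      then have "sum w P1 = 0"
        using sum.mono_neutral_left[OF less.prems(1) P1(2), of w] less.prems(3) by simp
      moreover have "Min (fst ` P) \<in> fst ` P - fst ` P1"
        using Min_in[of "fst ` P"] less.prems(1) False unfolding P1_def by auto
      then have "card (fst ` P1) < card (fst ` P)"
        using less.prems(1) P1(2) by (intro psubset_card_mono) auto
      ultimately have "\<forall>p\<in>P1. w p = 0"
        using less.hyps[OF _ P1(1)] less.prems(2) P1(2) by blast
      then show ?thesis using low by blast
    qed simp
  qed
  then show ?thesis unfolding R.independent_subspaces_def by blast
qed


definition top_span :: "int \<Rightarrow> 'r set" where
  "top_span i = R.span ({rho x v | x v e. x \<in> ag e \<and> v \<in> hcompl i} \<union> F (i + 1))"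

lemma rho_homogeneous_F_in_top_span:
  assumes above: "\<And>e x r. d < e \<Longrightarrow> x \<in> ag e \<Longrightarrow> r \<in> F i \<Longrightarrow> rho x r \<in> top_span i"
    and x: "x \<in> ag d" and r: "r \<in> F i"
  shows "rho x r \<in> top_span i"
proof -
  have X: "R.subspace (top_span i)" unfolding top_span_def by simp
  have ge: "alg_ge sa ag (d + 1) \<subseteq> {y. rho y r' \<in> top_span i}" if r': "r' \<in> F i" for r'
    unfolding alg_ge_def using above r'
    by (intro alg.span_minimal) (auto simp: rho_subspace_vimage[OF X, unfolded vimage_def] Suc_le_eq)
  have "rho x (rho y v) \<in> top_span i" if "y \<in> alg_ge sa ag 1" "v \<in> F i" for y v
    using subsetD[OF ge[OF that(2)] alg_ge_mult[OF homogeneous_in_alg_ge[OF order_refl x] that(1)]]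
    by (simp add: rho_mult)
  then have "{rho y v | y v. y \<in> alg_ge sa ag 1 \<and> v \<in> F i} \<subseteq> {w. rho x w \<in> top_span i}"
    by blast
  then have "rad_flat sa ag sR actR f (F i) \<subseteq> {w. rho x w \<in> top_span i}"
    unfolding rad_flat_eq using act_subspace_vimage[OF X] by (intro R.span_minimal) (auto simp: vimage_def)
  moreover have "F (i + 1) \<subseteq> {w. rho x w \<in> top_span i}"
    using F_act unfolding top_span_def by (auto intro: R.span_base)
  ultimately have "radF i \<subseteq> {w. rho x w \<in> top_span i}"
    unfolding radF_def using act_subspace_vimage[OF X] by (intro R.span_minimal) (auto simp: vimage_def)
  then have "rho x (r - proj i r) \<in> top_span i" using diff_proj_in_radF[OF r] by blast
  moreover have "rho x (proj i r) \<in> top_span i"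
    using x r unfolding top_span_def hcompl_def by (intro R.span_base) blast
  ultimately show ?thesis using R.subspace_add[OF X] by (fastforce simp: act_diff)
qed

text \<open>A Nakayama argument: since \<open>\<aa>\<^sub>\<ge>\<^sub>1\<close> is nilpotent, downward induction on the degree
  shows that \<open>hcompl i\<close> generates \<open>F i\<close> modulo \<open>F (i + 1)\<close>.\<close>

lemma F_subset_top_span: "F i \<subseteq> top_span i"
proof
  have X: "R.subspace (top_span i)" unfolding top_span_def by simp
  fix r assume r: "r \<in> F i"
  obtain D where D: "\<forall>d\<ge>D. ag d = {0}" using homogeneous_eventually_0 by blast
  have claim: "\<forall>x\<in>ag d. \<forall>r\<in>F i. rho x r \<in> top_span i" for d
  proof (induction "D - d" arbitrary: d rule: less_induct)
    case less
    show ?case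
    proof (cases "D \<le> d")
      case True
      then show ?thesis using D R.subspace_0[OF X] by (simp add: module_hom.zero[OF rho_hom])
    next
      case False
      then show ?thesis
        using rho_homogeneous_F_in_top_span less.hyps by (metis diff_less_mono2 not_le)
    qed
  qed
  have "(\<Sum>e\<in>{e. hcomp 1 e \<noteq> 0}. rho (hcomp 1 e) r) \<in> top_span i"
    using claim r hcomp_in by (intro R.subspace_sum[OF X]) blast
  then show "r \<in> top_span i"
    using hcomp[of 1] by (simp add: rho_sum[symmetric] rho_one)
qed

definition span_above :: "int \<Rightarrow> 'r set" where
  "span_above i = R.span {rho x v | x v i' e. i \<le> i' \<and> x \<in> ag e \<and> v \<in> hcompl i'}"

lemma span_above_antimono: "i \<le> j \<Longrightarrow> span_above j \<subseteq> span_above i"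
  unfolding span_above_def by (rule R.span_mono) (blast intro: order_trans)

lemma F_subset_span_above: "F i \<subseteq> span_above i"
proof (cases "i \<le> m + 1")
  case True
  then show ?thesis
  proof (induction i rule: int_le_induct)
    case base
    then show ?case using F_vanish R.span_zero unfolding span_above_def by simp
  next
    case (step i)
    have "{rho x v | x v e. x \<in> ag e \<and> v \<in> hcompl (i - 1)} \<subseteq> span_above (i - 1)"
      unfolding span_above_def by (rule subsetI, rule R.span_base) blast
    then have "top_span (i - 1) \<subseteq> span_above (i - 1)"
      unfolding top_span_def using step.IH span_above_antimono[of "i - 1" i]
      by (intro R.span_minimal) (auto simp: span_above_def)
    then show ?case using F_subset_top_span by blast
  qed
next
  case False
  then show ?thesis using F_vanish R.span_zero unfolding span_above_def by simp
qed


definition grading :: "int \<Rightarrow> 'r set" where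
  "grading j = R.span {actR (f x) v | x v i. i \<le> j \<and> x \<in> ag (nat (j - i)) \<and> v \<in> hcompl i}"

lemma grading_subspace: "R.subspace (grading j)"
  unfolding grading_def by simp

lemma rho_hcompl_in_grading: "x \<in> ag e \<Longrightarrow> v \<in> hcompl i \<Longrightarrow> rho x v \<in> grading (i + int e)"
  unfolding grading_def
  by (rule R.span_base, rule CollectI, intro exI[of _ x] exI[of _ v] exI[of _ i]) simp

lemma grading_eq_span_layers:
  "grading j = R.span (\<Union>p\<in>{p. fst p + int (snd p) = j}. layer (fst p) (snd p))"
proof (rule antisym)
  show "grading j \<subseteq> R.span (\<Union>p\<in>{p. fst p + int (snd p) = j}. layer (fst p) (snd p))"
    unfolding grading_def
  proof (intro R.span_mono subsetI)
    fix u assume "u \<in> {actR (f x) v | x v i. i \<le> j \<and> x \<in> ag (nat (j - i)) \<and> v \<in> hcompl i}"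
    then obtain x v i where u: "u = rho x v" "i \<le> j" "x \<in> ag (nat (j - i))" "v \<in> hcompl i" by blast
    then have "u \<in> layer i (nat (j - i))" unfolding layer_def by (blast intro: R.span_base)
    then show "u \<in> (\<Union>p\<in>{p. fst p + int (snd p) = j}. layer (fst p) (snd p))"
      using u(2) by (intro UN_I[of "(i, nat (j - i))"]) auto
  qed
  have "layer i d \<subseteq> grading (i + int d)" for i d
    unfolding layer_def using rho_hcompl_in_grading
    by (intro R.span_minimal[OF _ grading_subspace]) blast
  then show "R.span (\<Union>p\<in>{p. fst p + int (snd p) = j}. layer (fst p) (snd p)) \<subseteq> grading j"
    by (intro R.span_minimal[OF _ grading_subspace]) force
qed

lemma span_above_subset_span_grading: "span_above i \<subseteq> R.span (\<Union>j. grading j)"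
proof -
  have "rho x v \<in> R.span (\<Union>j. grading j)" if "x \<in> ag e" "v \<in> hcompl i'" for x v e i'
    using rho_hcompl_in_grading[OF that] by (blast intro: R.span_base)
  then show ?thesis unfolding span_above_def by (intro R.span_minimal) auto
qed

lemma grading_is_dsum: "is_dsum sR grading"
proof (rule R.is_dsumI[OF grading_subspace])
  have "R.independent_subspaces (\<lambda>j. R.span (\<Union>p\<in>{p. fst p + int (snd p) = j}. layer (fst p) (snd p)))"
    using layer_subspace layers_independent by (rule R.independent_subspaces_blocks) auto
  then show "R.independent_subspaces grading"
    by (simp add: grading_eq_span_layers[abs_def])
  obtain i0 where "F i0 = UNIV" using filt_low by blast
  then show "R.span (\<Union>j. grading j) = UNIV"
    using F_subset_span_above[of i0] span_above_subset_span_grading[of i0] by blast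
qed

lemma rho_grading: "x \<in> ag e \<Longrightarrow> v \<in> grading j \<Longrightarrow> rho x v \<in> grading (j + int e)"
proof -
  assume x: "x \<in> ag e" and v: "v \<in> grading j"
  have "rho x (rho y w) \<in> grading (j + int e)" if "i \<le> j" "y \<in> ag (nat (j - i))" "w \<in> hcompl i" for y w i
    using rho_hcompl_in_grading[OF homogeneous_mult[OF x that(2)] that(3)] that(1)
    by (simp add: rho_mult add.commute)
  then have "grading j \<subseteq> {v. rho x v \<in> grading (j + int e)}"
    unfolding grading_def[of j] using act_subspace_vimage[OF grading_subspace]
    by (intro R.span_minimal) (auto simp: vimage_def)
  then show ?thesis using v by blast
qed

lemma mod_ge_subspace: "R.subspace (mod_ge sR grading j)"
  unfolding mod_ge_def by simp

lemma grading_subset_mod_ge: "j \<le> k \<Longrightarrow> grading k \<subseteq> mod_ge sR grading j"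
  unfolding mod_ge_def by (auto intro: R.span_base)

lemma rho_alg_ge_F_in_mod_ge:
  assumes x: "x \<in> alg_ge sa ag e" and r: "r \<in> F i"
  shows "rho x r \<in> mod_ge sR grading (i + int e)"
proof -
  have gen: "rho x' (rho y v) \<in> mod_ge sR grading (i + int e)"
    if "x' \<in> ag e'" "e \<le> e'" "y \<in> ag d" "i \<le> i'" "v \<in> hcompl i'" for x' e' y d v i'
    using rho_hcompl_in_grading[OF homogeneous_mult[OF that(1,3)] that(5)] that(2,4)
      grading_subset_mod_ge[of "i + int e" "i' + int (e' + d)"] by (auto simp: rho_mult)
  have "rho x (rho y v) \<in> mod_ge sR grading (i + int e)"
    if "y \<in> ag d" "i \<le> i'" "v \<in> hcompl i'" for y d v i'
  proof -
    have "alg_ge sa ag e \<subseteq> {x. rho x (rho y v) \<in> mod_ge sR grading (i + int e)}"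
      unfolding alg_ge_def using gen that rho_subspace_vimage[OF mod_ge_subspace]
      by (intro alg.span_minimal) (auto simp: vimage_def)
    then show ?thesis using x by blast
  qed
  then have "span_above i \<subseteq> {r. rho x r \<in> mod_ge sR grading (i + int e)}"
    unfolding span_above_def using act_subspace_vimage[OF mod_ge_subspace]
    by (intro R.span_minimal) (auto simp: vimage_def)
  then show ?thesis using F_subset_span_above r by blast
qed


lemma mod_ge_antimono: "j \<le> k \<Longrightarrow> mod_ge sR grading k \<subseteq> mod_ge sR grading j"
  unfolding mod_ge_def by (rule R.span_mono, rule UN_mono) auto

lemma ideal_act_F_in_mod_ge:
  assumes a: "a \<in> A.span {f x * y | x y. x \<in> alg_ge sa ag e}" and r: "r \<in> F i"
  shows "actR a r \<in> mod_ge sR grading (i + int e)"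
proof -
  have "actR (f x * y) r \<in> mod_ge sR grading (i + int e)" if "x \<in> alg_ge sa ag e" for x y
    using rho_alg_ge_F_in_mod_ge[OF that F_act[OF r]] by (simp add: act_mult)
  then have "A.span {f x * y | x y. x \<in> alg_ge sa ag e} \<subseteq> {a. actR a r \<in> mod_ge sR grading (i + int e)}"
    using act_left_subspace_vimage[OF mod_ge_subspace] by (intro A.span_minimal) (auto simp: vimage_def)
  then show ?thesis using a by blast
qed

lemma act_mod_ge: "v \<in> mod_ge sR grading j \<Longrightarrow> actR z v \<in> mod_ge sR grading j"
proof -
  let ?M = "{v. actR z v \<in> mod_ge sR grading j}"
  have M: "R.subspace ?M" using act_subspace_vimage[OF mod_ge_subspace] by (simp add: vimage_def)
  have "actR z (rho x w) \<in> mod_ge sR grading j"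
    if "j \<le> k" "i \<le> k" "x \<in> ag (nat (k - i))" "w \<in> hcompl i" for k i x w
  proof -
    let ?e = "nat (k - i)"
    have "f x * 1 \<in> A.span {f x * y | x y. x \<in> alg_ge sa ag ?e}"
      using homogeneous_in_alg_ge[OF order_refl that(3)] by (blast intro: A.span_base)
    then have "z * f x \<in> A.span {f x * y | x y. x \<in> alg_ge sa ag ?e}"
      using ideals unfolding ideal_condition_def by simp
    then have "actR (z * f x) w \<in> mod_ge sR grading (i + int ?e)"
      using ideal_act_F_in_mod_ge hcompl_subset_F that(4) by blast
    then show ?thesis using mod_ge_antimono[of j k] that(1,2) by (auto simp: act_mult)
  qed
  then have "grading k \<subseteq> ?M" if "j \<le> k" for k
    unfolding grading_def[of k] using that by (intro R.span_minimal[OF _ M]) auto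
  then have "R.span (\<Union>k\<in>{j..}. grading k) \<subseteq> ?M" by (intro R.span_minimal[OF _ M]) auto
  then have "mod_ge sR grading j \<subseteq> ?M" by (simp only: mod_ge_def)
  then show "v \<in> mod_ge sR grading j \<Longrightarrow> actR z v \<in> mod_ge sR grading j" by blast
qed

lemma phi_grading: "\<phi> ` grading j \<subseteq> NG j"
proof -
  have "\<phi> (rho x v) \<in> NG j" if "i \<le> j" "x \<in> ag (nat (j - i))" "v \<in> hcompl i" for x v i
    using NG_act[OF that(2)] phi_hcompl that(1,3) by (force simp: phi_act)
  then have "grading j \<subseteq> \<phi> -` NG j"
    unfolding grading_def by (intro R.span_minimal[OF _ phi.subspace_vimage[OF NG_subspace]]) auto
  then show ?thesis by blast
qed

lemma grading_admissible: "admissible_hybrid sA sR actR f ag grading"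
  unfolding admissible_hybrid_def graded_amod_def A_submodule_def
  using mod_R grading_is_dsum rho_grading mod_ge_subspace act_mod_ge by blast

end

theorem proposition8p10:
  fixes sa :: "'k::field \<Rightarrow> 'a::ring_1 \<Rightarrow> 'a" and ag :: "nat \<Rightarrow> 'a set"
    and sA :: "'k \<Rightarrow> 'A::ring_1 \<Rightarrow> 'A" and f :: "'a \<Rightarrow> 'A"
    and sR :: "'k \<Rightarrow> 'r::ab_group_add \<Rightarrow> 'r" and actR :: "'A \<Rightarrow> 'r \<Rightarrow> 'r"
    and F :: "int \<Rightarrow> 'r set"
    and sN :: "'k \<Rightarrow> 'n::ab_group_add \<Rightarrow> 'n" and actN :: "'A \<Rightarrow> 'n \<Rightarrow> 'n"
    and NG :: "int \<Rightarrow> 'n set"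
    and m :: int and \<phi> :: "'r \<Rightarrow> 'n"
  assumes alg_a: "k_algebra sa" and graded_a: "pos_graded sa ag"
    and alg_A: "k_algebra sA" and hom_f: "alg_hom sa sA f"
    and ideals: "ideal_condition sa ag sA f"
    and mod_R: "alg_module sA sR actR"
    and filt_sub: "\<forall>i. A_submodule sR actR (F i)"
    and filt_dec: "\<forall>i. F (i + 1) \<subseteq> F i"
    and filt_low: "\<exists>i0. \<forall>i\<le>i0. F i = UNIV"
    and filt_high: "\<exists>i1. \<forall>i\<ge>i1. F i = {0}"
    and filt_proj: "\<forall>i. proj_quot actR f (F i) (F (i + 1))"
    and N_adm: "admissible_hybrid sA sN actN f ag NG"
    and gen_m: "act_span sN actN f UNIV (NG m) = mod_ge sN NG m"
    and phi_hom: "A_hom sR actR sN actN \<phi>" and phi_surj: "surj \<phi>"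
    and phi_filt: "\<forall>i\<le>m. \<phi> ` F i = mod_ge sN NG i"
    and F_vanish: "\<forall>i>m. F i = {0}"
  shows "\<exists>h :: int \<Rightarrow> 'r set.
     (\<forall>i. h i \<subseteq> F i \<and> module.subspace sR (h i)
          \<and> (\<forall>x\<in>ag 0. \<forall>v\<in>h i. actR (f x) v \<in> h i)
          \<and> {c + v | c v. c \<in> module.span sR (F (i + 1) \<union> rad_flat sa ag sR actR f (F i)) \<and> v \<in> h i}
              = F i
          \<and> module.span sR (F (i + 1) \<union> rad_flat sa ag sR actR f (F i)) \<inter> h i = {0}
          \<and> \<phi> ` h i \<subseteq> NG i)
     \<and> (let RG = (\<lambda>j. module.span sR
                  {actR (f x) v | x v i. i \<le> j \<and> x \<in> ag (nat (j - i)) \<and> v \<in> h i})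
        in admissible_hybrid sA sR actR f ag RG \<and> (\<forall>j. \<phi> ` RG j \<subseteq> NG j))"
proof -
  interpret filtered_surjection sa ag sA f sR actR F sN actN NG m \<phi>
    by unfold_locales (fact assms)+
  obtain nn pp ss qq where data: "\<forall>i. quot_splitting actR f (F i) (F (i + 1)) (nn i) (pp i) (ss i) \<and>
      (\<forall>l<nn i. qq i l \<in> F i \<and> \<phi> (qq i l) \<in> NG i \<and> pp i (free_basis l) - qq i l \<in> radF i)"
    using splitting_data_exists by blast
  interpret split_filtered_surjection sa ag sA f sR actR F sN actN NG m \<phi> nn pp ss qq
    by unfold_locales (use data in blast)+
  have grading_eq: "(\<lambda>j. module.span sR
      {actR (f x) v | x v i. i \<le> j \<and> x \<in> ag (nat (j - i)) \<and> v \<in> hcompl i}) = grading"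
    by (simp add: fun_eq_iff grading_def)
  show ?thesis
  proof (intro exI[of _ hcompl] conjI allI)
    fix i
    show "hcompl i \<subseteq> F i" by (rule hcompl_subset_F)
    show "R.subspace (hcompl i)" by (rule hcompl_subspace)
    show "\<forall>x\<in>ag 0. \<forall>v\<in>hcompl i. actR (f x) v \<in> hcompl i" using rho_degree_0_hcompl by blast
    show "{c + v | c v. c \<in> R.span (F (i + 1) \<union> rad_flat sa ag sR actR f (F i)) \<and> v \<in> hcompl i} = F i"
      using radF_plus_hcompl unfolding radF_def .
    show "R.span (F (i + 1) \<union> rad_flat sa ag sR actR f (F i)) \<inter> hcompl i = {0}"
      using radF_inter_hcompl unfolding radF_def .
    show "\<phi> ` hcompl i \<subseteq> NG i" by (rule phi_hcompl)
  next
    show "let RG = (\<lambda>j. R.span {actR (f x) v | x v i. i \<le> j \<and> x \<in> ag (nat (j - i)) \<and> v \<in> hcompl i})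
        in admissible_hybrid sA sR actR f ag RG \<and> (\<forall>j. \<phi> ` RG j \<subseteq> NG j)"
      unfolding Let_def grading_eq using grading_admissible phi_grading by blast
  qed
qed

end
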